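(* There is an absolute constant $C>0$ such that for every integer $n\ge 5$ with $n\equiv 1\pmod 4$ there is a dissection $D_n$ of the unit square $[0,1]^2$ into $n$ triangles with $\mathcal{R}(D_n)\le C/n^5$. Moreover $D_n$ can be taken of the following type: one triangle with vertices $(0,1),(1,1),(1,1-2/n)$ (area $1/n$), and the remaining region below the segment from $(0,1)$ to $(1,1-2/n)$ cut by $\tfrac{n-1}{4}$ vertical segments into trapezoidal slices (each with two vertical sides, bottom on the $x$-axis and top on that segment), each slice being divided into four triangles $T_1,T_2,T_3,T_4$ as follows: with the slice's bottom-left, bottom-right, top-right, top-left corners $A,B,Q,S$ and an extra point $M$ on the bottom side $AB$, $T_1=ASM$, $T_2=SM\,U$, $T_3=MUQ$, $T_4=MBQ$, where $U$ is an extra point on the top side $SQ$.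
   Context: A dissection of a polygon is a finite set of nondegenerate triangles with disjoint interiors whose union is the polygon. If its triangles have areas $a_1,\dots,a_n$, the range is $\mathcal{R}(D)=\max_{i,j}|a_i-a_j|$. *)

theory Defs
  imports "HOL-Analysis.Analysis"
begin

definition pt :: "real \<Rightarrow> real \<Rightarrow> real^2" where
  "pt x y = vector [x, y]"

definition tri :: "real^2 \<Rightarrow> real^2 \<Rightarrow> real^2 \<Rightarrow> (real^2) set" where
  "tri a b c = convex hull {a, b, c}"

definition nondeg_triangle :: "(real^2) set \<Rightarrow> bool" where
  "nondeg_triangle T \<longleftrightarrow> (\<exists>a b c. \<not> collinear {a, b, c} \<and> T = tri a b c)"

definition area :: "(real^2) set \<Rightarrow> real" where
  "area T = measure lebesgue T"

definition dissection :: "(real^2) set set \<Rightarrow> (real^2) set \<Rightarrow> bool" where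
  "dissection D P \<longleftrightarrow> finite D \<and> (\<forall>T\<in>D. nondeg_triangle T)
     \<and> (\<forall>T\<in>D. \<forall>T'\<in>D. T \<noteq> T' \<longrightarrow> interior T \<inter> interior T' = {})
     \<and> \<Union>D = P"

definition drange :: "(real^2) set set \<Rightarrow> real" where
  "drange D = Max {\<bar>area T - area T'\<bar> | T T'. T \<in> D \<and> T' \<in> D}"

definition unit_square :: "(real^2) set" where
  "unit_square = cbox (pt 0 0) (pt 1 1)"

text \<open>The dissection of the paper's special type, for n triangles, k = (n-1)/4 slices
  cut at abscissae xs 0 < xs 1 < ... < xs k, with bottom points (m i, 0) and top points
  (u i, h (u i)) in slice i (1 \<le> i \<le> k), where h is the line through (0,1) and (1,1-2/n).\<close>
definition slice_dissection ::
  "nat \<Rightarrow> nat \<Rightarrow> (nat \<Rightarrow> real) \<Rightarrow> (nat \<Rightarrow> real) \<Rightarrow> (nat \<Rightarrow> real) \<Rightarrow> (real^2) set set" where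
  "slice_dissection n k xs m u =
     (let h = (\<lambda>x. 1 - 2 * x / real n) in
      {tri (pt 0 1) (pt 1 1) (pt 1 (1 - 2 / real n))} \<union>
      (\<Union>i\<in>{1..k}.
         (let A = pt (xs (i - 1)) 0; B = pt (xs i) 0;
              Q = pt (xs i) (h (xs i)); S = pt (xs (i - 1)) (h (xs (i - 1)));
              M = pt (m i) 0; U = pt (u i) (h (u i))
          in {tri A S M, tri S M U, tri M U Q, tri M B Q})))"

end

theory Submission
  imports Defs
begin

text \<open>Cut the region below the segment from \<open>(0,1)\<close> to \<open>(1,1-2/n)\<close> by vertical lines at
  \<open>x\<^sub>i = (n - \<surd>(n\<^sup>2 - 16i))/2\<close>, so that each of the \<open>(n-1)/4\<close> trapezoidal slices has area
  exactly \<open>4/n\<close>. In a slice of width \<open>w\<close> and side heights \<open>h\<^sub>a, h\<^sub>b\<close>, place \<open>U\<close> at the midpoint of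
  the top side and \<open>M\<close> so that \<open>T\<^sub>1\<close> and \<open>T\<^sub>4\<close> have equal areas; then \<open>T\<^sub>1, T\<^sub>4\<close> have area
  \<open>1/n - \<delta>\<close> and \<open>T\<^sub>2, T\<^sub>3\<close> have area \<open>1/n + \<delta>\<close> with \<open>\<delta> = w (h\<^sub>a - h\<^sub>b)\<^sup>2 / (8 (h\<^sub>a + h\<^sub>b))\<close>.
  Since \<open>h\<^sub>a - h\<^sub>b = 2w/n\<close>, \<open>h\<^sub>a + h\<^sub>b \<ge> 1\<close> and \<open>w \<le> 8/n\<close>, we get \<open>\<delta> \<le> 256/n\<^sup>5\<close>; the top triangle
  has area exactly \<open>1/n\<close>. The triangles do not overlap because any two of them are separated
  by a line: a vertical cut, the top segment, or a segment through \<open>M\<close>.\<close>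

section \<open>Oriented area and triangles\<close>

text \<open>Twice the signed area of the triangle \<open>a b p\<close>, positive when it is counterclockwise.\<close>
definition orient :: "real^2 \<Rightarrow> real^2 \<Rightarrow> real^2 \<Rightarrow> real" where
  "orient a b p = (b$1 - a$1) * (p$2 - a$2) - (b$2 - a$2) * (p$1 - a$1)"

lemma pt_nth [simp]: "pt x y $ 1 = x" "pt x y $ 2 = y"
  by (simp_all add: pt_def)

lemma pt_eta: "p = pt (p$1) (p$2)"
  by (simp add: vec_eq_iff forall_2)

lemma orient_pt [simp]:
  "orient (pt x1 y1) (pt x2 y2) (pt x3 y3) = (x2 - x1) * (y3 - y1) - (y2 - y1) * (x3 - x1)"
  by (simp add: orient_def)

lemma orient_swap: "orient b a p = - orient a b p"
  unfolding orient_def by (simp add: algebra_simps)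

lemma orient_self [simp]: "orient a a p = 0"
  by (simp add: orient_def)

lemma orient_eq_inner:
  "orient a b p = vector [a$2 - b$2, b$1 - a$1] \<bullet> p - vector [a$2 - b$2, b$1 - a$1] \<bullet> a"
  by (simp add: orient_def inner_vec_def sum_2 algebra_simps)

lemma tri_vertices: "a \<in> tri a b c" "b \<in> tri a b c" "c \<in> tri a b c"
  unfolding tri_def by (simp_all add: hull_inc)

lemma tri_rotate: "tri a b c = tri b c a"
  by (simp add: tri_def insert_commute)

lemma tri_swap: "tri a b c = tri a c b"
  by (simp add: tri_def insert_commute)

lemma tri_subset_convex: "convex S \<Longrightarrow> a \<in> S \<Longrightarrow> b \<in> S \<Longrightarrow> c \<in> S \<Longrightarrow> tri a b c \<subseteq> S"
  unfolding tri_def by (intro hull_minimal) auto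

lemma mem_unit_square: "p \<in> unit_square \<longleftrightarrow> 0 \<le> p$1 \<and> p$1 \<le> 1 \<and> 0 \<le> p$2 \<and> p$2 \<le> 1"
  unfolding unit_square_def mem_box_cart forall_2 by auto

lemma tri_subset_unit_square:
  "a \<in> unit_square \<Longrightarrow> b \<in> unit_square \<Longrightarrow> c \<in> unit_square \<Longrightarrow> tri a b c \<subseteq> unit_square"
  unfolding unit_square_def by (intro tri_subset_convex convex_box)

lemma area_tri: "area (tri a b c) = \<bar>orient a b c\<bar> / 2"
proof -
  have "closed (tri a b c)"
    unfolding tri_def by (intro compact_imp_closed finite_imp_compact_convex_hull) auto
  then have "area (tri a b c) = measure lborel (tri a b c)"
    unfolding area_def by (intro measure_completion) auto
  also have "\<dots> = \<bar>orient a b c\<bar> / 2"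
    unfolding tri_def content_triangle orient_def by (simp add: algebra_simps abs_minus_commute)
  finally show ?thesis .
qed

lemma nondeg_triangle_tri:
  assumes "orient a b c \<noteq> 0"
  shows "nondeg_triangle (tri a b c)"
proof -
  have "\<not> collinear {a, b, c}"
  proof
    assume "collinear {a, b, c}"
    then obtain u s t where "b - a = s *\<^sub>R u" "c - a = t *\<^sub>R u"
      unfolding collinear_def by (meson insertCI)
    then have "b$i - a$i = s * u$i" "c$i - a$i = t * u$i" for i
      by (simp_all add: vec_eq_iff)
    then have "orient a b c = 0" unfolding orient_def by simp
    with assms show False ..
  qed
  then show ?thesis unfolding nondeg_triangle_def by blast
qed

lemma orient_sum: "orient b c p + orient c a p + orient a b p = orient a b c"
  unfolding orient_def by (simp add: algebra_simps)

lemma orient_barycentric: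
  "orient a b c * p$i = orient b c p * a$i + orient c a p * b$i + orient a b p * c$i"
  if "i = 1 \<or> i = 2"
  using that unfolding orient_def by (auto simp: algebra_simps)

lemma mem_tri_if_orient_nonneg:
  assumes "orient a b c > 0" "orient a b p \<ge> 0" "orient b c p \<ge> 0" "orient c a p \<ge> 0"
  shows "p \<in> tri a b c"
proof -
  txt \<open>The barycentric coordinates of \<open>p\<close>:\<close>
  define u v w where "u = orient b c p / orient a b c" and "v = orient c a p / orient a b c"
    and "w = orient a b p / orient a b c"
  have "u + v + w = 1"
    using assms(1) orient_sum[of b c p a] unfolding u_def v_def w_def
    by (simp add: add_divide_distrib[symmetric])
  moreover have "p$i = u * a$i + v * b$i + w * c$i" if "i = 1 \<or> i = 2" for i
    using orient_barycentric[OF that, of a b c p] assms(1) unfolding u_def v_def w_def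
    by (simp add: field_simps)
  then have "p = u *\<^sub>R a + v *\<^sub>R b + w *\<^sub>R c"
    unfolding vec_eq_iff forall_2 by simp
  moreover have "u \<ge> 0" "v \<ge> 0" "w \<ge> 0"
    using assms unfolding u_def v_def w_def by simp_all
  ultimately show ?thesis unfolding tri_def convex_hull_3 by blast
qed

lemma interior_orient_le:
  assumes "a \<noteq> b"
  shows "interior {p. orient a b p \<le> 0} = {p. orient a b p < 0}"
proof -
  have "vector [a$2 - b$2, b$1 - a$1] \<noteq> (0::real^2)"
  proof
    assume "vector [a$2 - b$2, b$1 - a$1] = (0::real^2)"
    then have "a$1 = b$1" "a$2 = b$2"
      by (metis pt_def pt_nth right_minus_eq zero_index)+
    with assms show False by (simp add: vec_eq_iff forall_2)
  qed
  then show ?thesis unfolding orient_eq_inner by simp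
qed

lemma tri_subset_orient_le:
  assumes "orient p q a \<le> 0" "orient p q b \<le> 0" "orient p q c \<le> 0"
  shows "tri a b c \<subseteq> {z. orient p q z \<le> 0}"
proof -
  have "convex {z. orient p q z \<le> 0}"
    unfolding orient_eq_inner by (simp add: convex_halfspace_le)
  with assms show ?thesis unfolding tri_def by (intro hull_minimal) auto
qed

section \<open>Triangles separated by a line\<close>

definition separated :: "(real^2) set \<Rightarrow> (real^2) set \<Rightarrow> bool" where
  "separated T T' \<longleftrightarrow> (\<exists>a b. T \<subseteq> {p. orient a b p \<le> 0} \<and> T' \<subseteq> {p. orient a b p \<ge> 0}
      \<and> (\<exists>z \<in> T \<union> T'. orient a b z \<noteq> 0))"

lemma separated_sym:
  assumes "separated T T'"
  shows "separated T' T"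
proof -
  obtain a b where "T \<subseteq> {p. orient a b p \<le> 0}" "T' \<subseteq> {p. orient a b p \<ge> 0}"
    "\<exists>z \<in> T \<union> T'. orient a b z \<noteq> 0"
    using assms unfolding separated_def by blast
  then show ?thesis
    unfolding separated_def by (intro exI[of _ b] exI[of _ a]) (auto simp: orient_swap[of b a])
qed

lemma separated_interior_disjoint:
  assumes "separated T T'"
  shows "interior T \<inter> interior T' = {}"
proof -
  obtain a b where ab: "T \<subseteq> {p. orient a b p \<le> 0}" "T' \<subseteq> {p. orient a b p \<ge> 0}"
    "\<exists>z \<in> T \<union> T'. orient a b z \<noteq> 0"
    using assms unfolding separated_def by blast
  have ab': "T' \<subseteq> {p. orient b a p \<le> 0}"
    using ab(2) by (auto simp: orient_swap[of b a])
  have "a \<noteq> b"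
    using ab(3) orient_self by blast
  then have "interior T \<subseteq> {p. orient a b p < 0}" "interior T' \<subseteq> {p. orient b a p < 0}"
    using interior_mono[OF ab(1)] interior_mono[OF ab'] by (simp_all add: interior_orient_le)
  then show ?thesis by (force simp: orient_swap[of b a])
qed

lemma separated_neq: "separated T T' \<Longrightarrow> T \<noteq> T'"
  unfolding separated_def by force

lemma separated_triI:
  assumes "orient p q a \<le> 0" "orient p q b \<le> 0" "orient p q c \<le> 0"
    and "orient p q a' \<ge> 0" "orient p q b' \<ge> 0" "orient p q c' \<ge> 0"
    and "\<exists>z \<in> {a, b, c, a', b', c'}. orient p q z \<noteq> 0"
  shows "separated (tri a b c) (tri a' b' c')"
proof -
  have "tri a' b' c' \<subseteq> {z. orient q p z \<le> 0}"
    using assms(4-6) by (intro tri_subset_orient_le) (simp_all add: orient_swap[of q p])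
  then have "tri a' b' c' \<subseteq> {z. orient p q z \<ge> 0}"
    by (auto simp: orient_swap[of q p])
  moreover have "\<exists>z \<in> tri a b c \<union> tri a' b' c'. orient p q z \<noteq> 0"
    using assms(7) tri_vertices by blast
  ultimately show ?thesis
    unfolding separated_def using tri_subset_orient_le[OF assms(1-3)] by blast
qed

text \<open>The strict inequality keeps triangles of adjacent strips from lying entirely on
  their common edge, so that they are separated by it.\<close>
definition in_strip :: "real \<Rightarrow> real \<Rightarrow> (real^2) set \<Rightarrow> bool" where
  "in_strip a b T \<longleftrightarrow> (\<exists>p q r. T = tri p q r \<and> (\<forall>z \<in> {p, q, r}. a \<le> z$1 \<and> z$1 \<le> b)
     \<and> (\<exists>z \<in> {p, q, r}. a < z$1))"

lemma separated_if_in_strip: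
  assumes "in_strip a b T" "in_strip a' b' T'" "b \<le> a'"
  shows "separated T T'"
proof -
  obtain p q r where T: "T = tri p q r" "\<forall>z \<in> {p, q, r}. z$1 \<le> b"
    using assms(1) unfolding in_strip_def by blast
  obtain p' q' r' where T': "T' = tri p' q' r'" "\<forall>z \<in> {p', q', r'}. a' \<le> z$1"
      "\<exists>z \<in> {p', q', r'}. a' < z$1"
    using assms(2) unfolding in_strip_def by blast
  have vertical: "orient (pt b 1) (pt b 0) z = z$1 - b" for z
    by (simp add: orient_def)
  show ?thesis unfolding T(1) T'(1)
    by (rule separated_triI[of "pt b 1" "pt b 0"]) (use T T' assms(3) in \<open>auto simp: vertical\<close>)
qed

section \<open>A trapezoidal slice and its four triangles\<close>

datatype slice_label = T1 | T2 | T3 | T4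

lemma UNIV_slice_label: "(UNIV :: slice_label set) = {T1, T2, T3, T4}"
  using slice_label.exhaust by auto

primrec slice_tri ::
  "real \<Rightarrow> real \<Rightarrow> real \<Rightarrow> real \<Rightarrow> real \<Rightarrow> slice_label \<Rightarrow> (real^2) set" where
  "slice_tri a b ha hb m T1 = tri (pt a 0) (pt a ha) (pt m 0)"
| "slice_tri a b ha hb m T2 = tri (pt a ha) (pt m 0) (pt ((a + b) / 2) ((ha + hb) / 2))"
| "slice_tri a b ha hb m T3 = tri (pt m 0) (pt ((a + b) / 2) ((ha + hb) / 2)) (pt b hb)"
| "slice_tri a b ha hb m T4 = tri (pt m 0) (pt b 0) (pt b hb)"

lemma slice_tri_orient:
  "orient (pt a 0) (pt a ha) (pt m 0) = - ((m - a) * ha)"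
  "orient (pt a ha) (pt m 0) (pt ((a + b) / 2) ((ha + hb) / 2))
     = ((b - m) * ha + (m - a) * hb) / 2"
  "orient (pt m 0) (pt ((a + b) / 2) ((ha + hb) / 2)) (pt b hb)
     = - ((b - m) * ha + (m - a) * hb) / 2"
  "orient (pt m 0) (pt b 0) (pt b hb) = (b - m) * hb"
  by (simp_all add: field_simps)

context
  fixes a b ha hb m :: real
  assumes foot: "a < m" "m < b" and heights: "0 < ha" "0 < hb"
begin

lemma slice_products_pos:
  "0 < (m - a) * ha" "0 < (b - m) * ha" "0 < (m - a) * hb" "0 < (b - m) * hb"
  using foot heights by simp_all

lemma slice_tri_nondeg: "nondeg_triangle (slice_tri a b ha hb m j)"
  using slice_products_pos
  by (cases j) (auto intro!: nondeg_triangle_tri simp del: orient_pt simp: slice_tri_orient)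

lemma slice_tri_area:
  "area (slice_tri a b ha hb m T1) = (m - a) * ha / 2"
  "area (slice_tri a b ha hb m T2) = ((b - m) * ha + (m - a) * hb) / 4"
  "area (slice_tri a b ha hb m T3) = ((b - m) * ha + (m - a) * hb) / 4"
  "area (slice_tri a b ha hb m T4) = (b - m) * hb / 2"
  using slice_products_pos by (simp_all del: orient_pt add: area_tri slice_tri_orient)

lemma slice_tri_separated_T1:
  "j \<noteq> T1 \<Longrightarrow> separated (slice_tri a b ha hb m j) (slice_tri a b ha hb m T1)"
  using slice_products_pos
  by (cases j) (auto intro!: separated_triI[of "pt m 0" "pt a ha"] simp: field_simps)

lemma slice_tri_separated_T4:
  "j \<noteq> T4 \<Longrightarrow> separated (slice_tri a b ha hb m T4) (slice_tri a b ha hb m j)"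
  using slice_products_pos
  by (cases j) (auto intro!: separated_triI[of "pt m 0" "pt b hb"] simp: field_simps)

lemma slice_tri_separated_T2_T3: "separated (slice_tri a b ha hb m T3) (slice_tri a b ha hb m T2)"
  using slice_products_pos
  by (auto intro!: separated_triI[of "pt m 0" "pt ((a + b) / 2) ((ha + hb) / 2)"] simp: field_simps)

lemma slice_tri_separated:
  assumes "j \<noteq> j'"
  shows "separated (slice_tri a b ha hb m j) (slice_tri a b ha hb m j')"
proof -
  have "separated (slice_tri a b ha hb m j) (slice_tri a b ha hb m j') \<or>
      separated (slice_tri a b ha hb m j') (slice_tri a b ha hb m j)"
    using assms slice_tri_separated_T1[of j] slice_tri_separated_T1[of j']
      slice_tri_separated_T4[of j] slice_tri_separated_T4[of j'] slice_tri_separated_T2_T3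
    by (cases j; cases j') simp_all
  then show ?thesis
    using separated_sym by blast
qed

lemma slice_tri_in_strip: "in_strip a b (slice_tri a b ha hb m j)"
  using foot by (cases j) (auto simp: in_strip_def intro!: exI)

lemma slice_tri_cover:
  assumes "a \<le> x" "x \<le> b" "0 \<le> y" and below: "orient (pt a ha) (pt b hb) (pt x y) \<le> 0"
  shows "\<exists>j. pt x y \<in> slice_tri a b ha hb m j"
proof -
  let ?p = "pt x y" and ?A = "pt a 0" and ?B = "pt b 0" and ?Q = "pt b hb" and ?S = "pt a ha"
    and ?M = "pt m 0" and ?U = "pt ((a + b) / 2) ((ha + hb) / 2)"
  have US: "orient ?U ?S ?p \<ge> 0" and QU: "orient ?Q ?U ?p \<ge> 0"
    using below by (simp_all add: field_simps)
  have AM: "orient ?A ?M ?p \<ge> 0" and SA: "orient ?S ?A ?p \<ge> 0"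
    and MB: "orient ?M ?B ?p \<ge> 0" and BQ: "orient ?B ?Q ?p \<ge> 0"
    using assms foot heights by (simp_all add: mult_nonpos_nonneg mult_le_0_iff)
  have AMS: "orient ?A ?M ?S > 0" and MBQ: "orient ?M ?B ?Q > 0"
    and MUS: "orient ?M ?U ?S > 0" and MQU: "orient ?M ?Q ?U > 0"
    using slice_products_pos by (simp_all add: field_simps)
  txt \<open>The segments \<open>MS\<close>, \<open>MU\<close>, \<open>MQ\<close> fan the slice into \<open>T\<^sub>1, \<dots>, T\<^sub>4\<close>.\<close>
  consider "orient ?M ?S ?p \<ge> 0" | "orient ?M ?Q ?p \<le> 0"
    | "orient ?M ?S ?p < 0" "orient ?M ?U ?p \<ge> 0"
    | "orient ?M ?Q ?p > 0" "orient ?M ?U ?p < 0"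
    by linarith
  then show ?thesis
  proof cases
    case 1
    then have "?p \<in> tri ?A ?M ?S"
      using AMS AM SA by (intro mem_tri_if_orient_nonneg) (simp_all del: orient_pt)
    then show ?thesis
      by (metis slice_tri.simps(1) tri_rotate tri_swap)
  next
    case 2
    then have "?p \<in> tri ?M ?B ?Q"
      using MBQ MB BQ
      by (intro mem_tri_if_orient_nonneg) (simp_all del: orient_pt add: orient_swap[of ?Q])
    then show ?thesis
      by (metis slice_tri.simps(4))
  next
    case 3
    then have "?p \<in> tri ?M ?U ?S"
      using MUS US
      by (intro mem_tri_if_orient_nonneg) (simp_all del: orient_pt add: orient_swap[of ?S])
    then show ?thesis
      by (metis slice_tri.simps(2) tri_rotate)
  next
    case 4
    then have "?p \<in> tri ?M ?Q ?U"
      using MQU QU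
      by (intro mem_tri_if_orient_nonneg) (simp_all del: orient_pt add: orient_swap[of ?U])
    then show ?thesis
      by (metis slice_tri.simps(3) tri_swap)
  qed
qed

end

text \<open>The choice of \<open>M\<close> that gives \<open>T\<^sub>1\<close> and \<open>T\<^sub>4\<close> equal areas.\<close>
definition balanced_foot :: "real \<Rightarrow> real \<Rightarrow> real \<Rightarrow> real \<Rightarrow> real" where
  "balanced_foot a b ha hb = a + (b - a) * hb / (ha + hb)"

lemma balanced_foot_between:
  assumes "a < b" "0 < ha" "0 < hb"
  shows "a < balanced_foot a b ha hb" "balanced_foot a b ha hb < b"
proof -
  have "b - balanced_foot a b ha hb = (b - a) * ha / (ha + hb)"
    using assms unfolding balanced_foot_def by (simp add: field_simps)
  moreover have "0 < (b - a) * ha / (ha + hb)"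
    using assms by simp
  ultimately show "balanced_foot a b ha hb < b"
    by linarith
  show "a < balanced_foot a b ha hb"
    using assms unfolding balanced_foot_def by simp
qed

text \<open>\<open>(b - a) (h\<^sub>a + h\<^sub>b) / 8\<close> is a quarter of the area of the slice.\<close>
lemma balanced_slice_tri_area:
  assumes "a < b" "0 < ha" "0 < hb"
  shows "\<bar>area (slice_tri a b ha hb (balanced_foot a b ha hb) j) - (b - a) * (ha + hb) / 8\<bar>
    = (b - a) * (ha - hb)^2 / (8 * (ha + hb))"
proof -
  define m where "m = balanced_foot a b ha hb"
  define s where "s = ha + hb"
  define \<delta> where "\<delta> = (b - a) * (ha - hb)^2 / (8 * s)"
  have s: "s > 0"
    using assms unfolding s_def by simp
  have m: "m - a = (b - a) * hb / s" "b - m = (b - a) * ha / s"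
    using s unfolding m_def balanced_foot_def s_def by (simp_all add: field_simps)
  have "(m - a) * ha / 2 = (b - a) * s / 8 - \<delta>" "(b - m) * hb / 2 = (b - a) * s / 8 - \<delta>"
    using s unfolding m \<delta>_def s_def by (simp_all add: field_simps power2_eq_square)
  moreover have "((b - m) * ha + (m - a) * hb) / 4 = (b - a) * (ha^2 + hb^2) / (4 * s)"
    using s unfolding m by (simp add: field_simps power2_eq_square)
  moreover have "(b - a) * (ha^2 + hb^2) / (4 * s) = (b - a) * s / 8 + \<delta>"
    using s unfolding \<delta>_def s_def by (simp add: field_simps power2_eq_square)
  ultimately have "area (slice_tri a b ha hb m T1) = (b - a) * s / 8 - \<delta>"
    "area (slice_tri a b ha hb m T2) = (b - a) * s / 8 + \<delta>"
    "area (slice_tri a b ha hb m T3) = (b - a) * s / 8 + \<delta>"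
    "area (slice_tri a b ha hb m T4) = (b - a) * s / 8 - \<delta>"
    using slice_tri_area[OF balanced_foot_between[OF assms] assms(2,3)]
    unfolding m_def[symmetric] by linarith+
  moreover have "\<delta> \<ge> 0"
    using assms s unfolding \<delta>_def by simp
  ultimately have "\<bar>area (slice_tri a b ha hb m j) - (b - a) * s / 8\<bar> = \<delta>"
    by (cases j) auto
  then show ?thesis
    unfolding m_def s_def \<delta>_def .
qed

section \<open>Slices under the roof\<close>

definition roof :: "real \<Rightarrow> real \<Rightarrow> real" where
  "roof N x = 1 - 2 * x / N"

definition top_tri :: "real \<Rightarrow> (real^2) set" where
  "top_tri N = tri (pt 0 1) (pt 1 1) (pt 1 (roof N 1))"

definition roof_slice_tri :: "real \<Rightarrow> real \<Rightarrow> real \<Rightarrow> slice_label \<Rightarrow> (real^2) set" where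
  "roof_slice_tri N a b =
     slice_tri a b (roof N a) (roof N b) (balanced_foot a b (roof N a) (roof N b))"

lemma orient_roof_line: "orient (pt 0 1) (pt 1 (roof N 1)) (pt x y) = y - roof N x"
  by (simp add: roof_def)

context
  fixes N :: real
  assumes N: "N \<ge> 2"
begin

lemma top_tri_nondeg: "nondeg_triangle (top_tri N)"
  unfolding top_tri_def using N by (intro nondeg_triangle_tri) (simp add: roof_def)

lemma top_tri_area: "area (top_tri N) = 1 / N"
  unfolding top_tri_def area_tri using N by (simp add: roof_def)

lemma top_tri_subset_unit_square: "top_tri N \<subseteq> unit_square"
  unfolding top_tri_def using N
  by (intro tri_subset_unit_square) (simp_all add: mem_unit_square roof_def)

lemma mem_top_tri:
  assumes "0 \<le> x" "x \<le> 1" "roof N x \<le> y" "y \<le> 1"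
  shows "pt x y \<in> top_tri N"
proof -
  have "pt x y \<in> tri (pt 0 1) (pt 1 (roof N 1)) (pt 1 1)"
    using assms N by (intro mem_tri_if_orient_nonneg) (simp_all add: roof_def field_simps)
  then show ?thesis
    unfolding top_tri_def by (metis tri_swap)
qed

end

context
  fixes N a b :: real
  assumes N: "N \<ge> 4" and ab: "0 \<le> a" "a < b" "b \<le> 1"
begin

lemma roof_pos: "0 < roof N a" "0 < roof N b"
  using N ab by (simp_all add: roof_def field_simps)

lemma roof_slice_tri_subset_unit_square: "roof_slice_tri N a b j \<subseteq> unit_square"
proof -
  have "a < balanced_foot a b (roof N a) (roof N b)" "balanced_foot a b (roof N a) (roof N b) < b"
    using balanced_foot_between[OF ab(2) roof_pos] by simp_all
  moreover have "roof N a \<le> 1" "roof N b \<le> 1" "roof N ((a + b) / 2) \<le> 1"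
    using N ab by (simp_all add: roof_def)
  moreover have "(roof N a + roof N b) / 2 = roof N ((a + b) / 2)"
    using N by (simp add: roof_def field_simps)
  ultimately show ?thesis
    unfolding roof_slice_tri_def using ab roof_pos
    by (cases j) (simp_all add: tri_subset_unit_square mem_unit_square)
qed

lemma roof_slice_tri_separated_top: "separated (roof_slice_tri N a b j) (top_tri N)"
proof -
  define m where "m = balanced_foot a b (roof N a) (roof N b)"
  have m: "a < m" "m < b"
    unfolding m_def using balanced_foot_between[OF ab(2) roof_pos] by simp_all
  have "roof N m > 0" "roof N 1 < 1" "roof N 0 = 1"
    using N ab m by (simp_all add: roof_def field_simps)
  moreover have "(roof N a + roof N b) / 2 = roof N ((a + b) / 2)"
    using N by (simp add: roof_def field_simps)
  ultimately show ?thesis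
    unfolding roof_slice_tri_def top_tri_def m_def[symmetric] using roof_pos
    by (cases j) (auto intro!: separated_triI[of "pt 0 1" "pt 1 (roof N 1)"]
        simp: orient_roof_line simp del: orient_pt)
qed

lemma roof_slice_tri_cover:
  assumes "a \<le> x" "x \<le> b" "0 \<le> y" "y \<le> roof N x"
  shows "\<exists>j. pt x y \<in> roof_slice_tri N a b j"
proof -
  have "orient (pt a (roof N a)) (pt b (roof N b)) (pt x y) = (b - a) * (y - roof N x)"
    using N by (simp add: roof_def field_simps)
  also have "\<dots> \<le> 0"
    using assms ab by (simp add: mult_nonneg_nonpos)
  finally show ?thesis
    unfolding roof_slice_tri_def
    using slice_tri_cover[OF balanced_foot_between[OF ab(2) roof_pos] roof_pos] assms by blast
qed

lemma roof_slice_tri_area: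
  assumes trapezoid: "(b - a) * (roof N a + roof N b) / 2 = 4 / N"
  shows "\<bar>area (roof_slice_tri N a b j) - 1 / N\<bar> \<le> 256 / N ^ 5"
proof -
  define w where "w = b - a"
  define s where "s = roof N a + roof N b"
  have "2 * a / N + 2 * b / N \<le> 1"
    using N ab by (simp add: field_simps)
  then have w: "w > 0" and s: "s \<ge> 1"
    using ab unfolding w_def s_def roof_def by simp_all
  have ws: "w * s = 8 / N"
    using trapezoid unfolding w_def s_def by (simp add: field_simps)
  have "w \<le> w * s"
    using w s by simp
  then have "w \<le> 8 / N"
    using ws by simp
  have "roof N a - roof N b = 2 * w / N"
    unfolding w_def roof_def using N by (simp add: field_simps)
  moreover have "w * s / 8 = 1 / N"
    using ws by simp
  ultimately have "\<bar>area (roof_slice_tri N a b j) - 1 / N\<bar> = w * (2 * w / N)^2 / (8 * s)"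
    using balanced_slice_tri_area[OF ab(2) roof_pos, of j]
    unfolding roof_slice_tri_def w_def[symmetric] s_def[symmetric] by simp
  also have "\<dots> \<le> w * (2 * w / N)^2 / 8"
    using w s by (intro divide_left_mono) auto
  also have "\<dots> = w ^ 3 / (2 * N^2)"
    by (simp add: field_simps power2_eq_square power3_eq_cube)
  also have "\<dots> \<le> (8 / N) ^ 3 / (2 * N^2)"
    using w \<open>w \<le> 8 / N\<close> by (intro divide_right_mono power_mono) auto
  also have "\<dots> = 256 / N ^ 5"
    using N by (simp add: field_simps power2_eq_square power3_eq_cube eval_nat_numeral)
  finally show ?thesis .
qed

end

lemma dissection_insert_separated:
  fixes G :: "'i \<Rightarrow> (real^2) set"
  assumes "finite I" "nondeg_triangle T" "\<And>p. p \<in> I \<Longrightarrow> nondeg_triangle (G p)"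
    and sep_T: "\<And>p. p \<in> I \<Longrightarrow> separated (G p) T"
    and sep_G: "\<And>p q. p \<in> I \<Longrightarrow> q \<in> I \<Longrightarrow> p \<noteq> q \<Longrightarrow> separated (G p) (G q)"
    and "T \<union> (\<Union>p\<in>I. G p) = P"
  shows "dissection (insert T (G ` I)) P" "card (insert T (G ` I)) = Suc (card I)"
proof -
  have sep: "separated X Y" if "X \<in> insert T (G ` I)" "Y \<in> insert T (G ` I)" "X \<noteq> Y" for X Y
    using that sep_T sep_G separated_sym by blast
  then show "dissection (insert T (G ` I)) P"
    using assms separated_interior_disjoint unfolding dissection_def by auto
  have "T \<notin> G ` I"
    using sep_T separated_neq by blast
  moreover have "inj_on G I"
    using sep_G separated_neq unfolding inj_on_def by blast
  ultimately show "card (insert T (G ` I)) = Suc (card I)"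
    using assms(1) by (simp add: card_image)
qed

lemma drange_le:
  assumes "finite D" "D \<noteq> {}" "\<And>T. T \<in> D \<Longrightarrow> \<bar>area T - c\<bar> \<le> \<epsilon>"
  shows "drange D \<le> 2 * \<epsilon>"
proof -
  have "{\<bar>area T - area T'\<bar> | T T'. T \<in> D \<and> T' \<in> D} = (\<lambda>(T, T'). \<bar>area T - area T'\<bar>) ` (D \<times> D)"
    by auto
  moreover have "\<bar>area T - area T'\<bar> \<le> 2 * \<epsilon>" if "T \<in> D" "T' \<in> D" for T T'
    using assms(3)[OF that(1)] assms(3)[OF that(2)] by linarith
  ultimately show ?thesis
    unfolding drange_def using assms(1,2) by (simp add: Max_le_iff)
qed

lemma exists_step_containing:
  fixes f :: "nat \<Rightarrow> real"
  assumes "0 < k" "f 0 \<le> x" "x \<le> f k"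
  shows "\<exists>i\<in>{1..k}. f (i - 1) \<le> x \<and> x \<le> f i"
  using assms
proof (induction k)
  case (Suc k)
  show ?case
  proof (cases "k > 0 \<and> x \<le> f k")
    case True
    then show ?thesis
      using Suc.IH Suc.prems(2) by fastforce
  next
    case False
    then show ?thesis
      using Suc.prems by (intro bexI[of _ "Suc k"]) auto
  qed
qed simp

text \<open>\<open>x\<^sub>i\<close> solves \<open>x - x\<^sup>2/n = 4i/n\<close>, i.e. the region below the roof to the left of \<open>x\<^sub>i\<close>
  has area \<open>4i/n\<close>.\<close>
definition slice_cut :: "nat \<Rightarrow> nat \<Rightarrow> real" where
  "slice_cut n i = (real n - sqrt ((real n)^2 - 16 * real i)) / 2"

definition slice_foot :: "nat \<Rightarrow> nat \<Rightarrow> real" where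
  "slice_foot n i = balanced_foot (slice_cut n (i - 1)) (slice_cut n i)
     (roof (real n) (slice_cut n (i - 1))) (roof (real n) (slice_cut n i))"

definition slice_mid :: "nat \<Rightarrow> nat \<Rightarrow> real" where
  "slice_mid n i = (slice_cut n (i - 1) + slice_cut n i) / 2"

lemma slice_cut_0 [simp]: "slice_cut n 0 = 0"
  by (simp add: slice_cut_def)

lemma slice_cut_mono: "j \<le> i \<Longrightarrow> slice_cut n j \<le> slice_cut n i"
  unfolding slice_cut_def by (simp add: divide_right_mono)

lemma slice_cut_strict_mono: "1 \<le> i \<Longrightarrow> slice_cut n (i - 1) < slice_cut n i"
  unfolding slice_cut_def by (simp add: divide_strict_right_mono)

context
  fixes n k :: nat
  assumes n: "n \<ge> 5" and nk: "n = 4 * k + 1"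
begin

lemma slice_cut_last: "slice_cut n k = 1"
proof -
  have "(real n)^2 - 16 * real k = (real n - 2)^2"
    using nk by (simp add: power2_eq_square algebra_simps)
  then show ?thesis
    using n unfolding slice_cut_def by simp
qed

lemma slice_cut_bounds: "i \<le> k \<Longrightarrow> 0 \<le> slice_cut n i \<and> slice_cut n i \<le> 1"
  using slice_cut_mono[of 0 i n] slice_cut_mono[of i k n] slice_cut_last by simp

lemma slice_cut_equation:
  assumes "i \<le> k"
  shows "slice_cut n i - (slice_cut n i)^2 / real n = 4 * real i / real n"
proof -
  define r where "r = sqrt ((real n)^2 - 16 * real i)"
  have "16 * real i \<le> 4 * real n - 4"
    using assms nk by simp
  also have "\<dots> \<le> (real n)^2"
    using zero_le_power2[of "real n - 2"] unfolding power2_diff by simp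
  finally have r2: "r^2 = (real n)^2 - 16 * real i"
    unfolding r_def by simp
  have "slice_cut n i - (slice_cut n i)^2 / real n = ((real n)^2 - r^2) / (4 * real n)"
    using n unfolding slice_cut_def r_def[symmetric] by (simp add: field_simps power2_eq_square)
  also have "\<dots> = 4 * real i / real n"
    unfolding r2 by simp
  finally show ?thesis .
qed

lemma slice_cut_trapezoid:
  assumes "i \<in> {1..k}"
  shows "(slice_cut n i - slice_cut n (i - 1)) *
    (roof (real n) (slice_cut n (i - 1)) + roof (real n) (slice_cut n i)) / 2 = 4 / real n"
proof -
  have i: "i \<le> k" "i - 1 \<le> k"
    using assms by auto
  have "(slice_cut n i - slice_cut n (i - 1)) *
      (roof (real n) (slice_cut n (i - 1)) + roof (real n) (slice_cut n i)) / 2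
    = (slice_cut n i - (slice_cut n i)^2 / real n)
      - (slice_cut n (i - 1) - (slice_cut n (i - 1))^2 / real n)"
    using n by (simp add: roof_def field_simps power2_eq_square)
  also have "\<dots> = 4 * real i / real n - 4 * real (i - 1) / real n"
    unfolding slice_cut_equation[OF i(1)] slice_cut_equation[OF i(2)] ..
  also have "\<dots> = 4 / real n"
    using assms by (simp add: of_nat_diff algebra_simps flip: diff_divide_distrib)
  finally show ?thesis .
qed

lemma slice_cut_step:
  assumes "i \<in> {1..k}"
  shows "0 \<le> slice_cut n (i - 1)" "slice_cut n (i - 1) < slice_cut n i" "slice_cut n i \<le> 1"
  using assms slice_cut_bounds[of "i - 1"] slice_cut_bounds[of i] slice_cut_strict_mono[of i n]
  by auto

lemma slice_foot_mid_between:
  assumes "i \<in> {1..k}"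
  shows "slice_cut n (i - 1) < slice_foot n i" "slice_foot n i < slice_cut n i"
    "slice_cut n (i - 1) < slice_mid n i" "slice_mid n i < slice_cut n i"
proof -
  have "real n \<ge> 4"
    using n by simp
  note step = slice_cut_step[OF assms]
  show "slice_cut n (i - 1) < slice_foot n i" "slice_foot n i < slice_cut n i"
    unfolding slice_foot_def using balanced_foot_between[OF step(2) roof_pos[OF \<open>real n \<ge> 4\<close> step]]
    by simp_all
  show "slice_cut n (i - 1) < slice_mid n i" "slice_mid n i < slice_cut n i"
    unfolding slice_mid_def using step(2) by simp_all
qed

end

definition slice_piece :: "nat \<Rightarrow> nat \<times> slice_label \<Rightarrow> (real^2) set" where
  "slice_piece n = (\<lambda>(i, j). roof_slice_tri (real n) (slice_cut n (i - 1)) (slice_cut n i) j)"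

lemma slice_dissection_eq:
  assumes "n > 0"
  shows "slice_dissection n k (slice_cut n) (slice_foot n) (slice_mid n)
    = insert (top_tri (real n)) (slice_piece n ` ({1..k} \<times> UNIV))"
proof -
  have mid: "1 - 2 * slice_mid n i / real n
      = (roof (real n) (slice_cut n (i - 1)) + roof (real n) (slice_cut n i)) / 2" for i
    using assms unfolding slice_mid_def roof_def by (simp add: field_simps)
  have "slice_piece n ` ({i} \<times> UNIV) =
      (let A = pt (slice_cut n (i - 1)) 0; B = pt (slice_cut n i) 0;
           Q = pt (slice_cut n i) (1 - 2 * slice_cut n i / real n);
           S = pt (slice_cut n (i - 1)) (1 - 2 * slice_cut n (i - 1) / real n);
           M = pt (slice_foot n i) 0; U = pt (slice_mid n i) (1 - 2 * slice_mid n i / real n)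
       in {tri A S M, tri S M U, tri M U Q, tri M B Q})" for i
    unfolding slice_piece_def roof_slice_tri_def UNIV_slice_label mid slice_foot_def
    by (simp add: Let_def roof_def slice_mid_def)
  moreover have "slice_piece n ` ({1..k} \<times> UNIV) = (\<Union>i\<in>{1..k}. slice_piece n ` ({i} \<times> UNIV))"
    by blast
  ultimately show ?thesis
    unfolding slice_dissection_def top_tri_def by (simp add: roof_def)
qed

context
  fixes n k :: nat
  assumes n: "n \<ge> 5" and nk: "n = 4 * k + 1"
begin

lemma slice_piece_props:
  assumes "p \<in> {1..k} \<times> UNIV"
  shows "nondeg_triangle (slice_piece n p)" "separated (slice_piece n p) (top_tri (real n))"
    "slice_piece n p \<subseteq> unit_square" "\<bar>area (slice_piece n p) - 1 / real n\<bar> \<le> 256 / real n ^ 5"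
proof -
  obtain i j where p: "p = (i, j)" "i \<in> {1..k}"
    using assms by auto
  have N: "real n \<ge> 4"
    using n by simp
  note step = slice_cut_step[OF n nk p(2)]
  show "nondeg_triangle (slice_piece n p)"
    unfolding p slice_piece_def roof_slice_tri_def
    using slice_tri_nondeg[OF balanced_foot_between[OF step(2) roof_pos[OF N step]] roof_pos[OF N step]]
    by simp
  show "separated (slice_piece n p) (top_tri (real n))" "slice_piece n p \<subseteq> unit_square"
    unfolding p slice_piece_def
    using roof_slice_tri_separated_top[OF N step] roof_slice_tri_subset_unit_square[OF N step] by simp_all
  show "\<bar>area (slice_piece n p) - 1 / real n\<bar> \<le> 256 / real n ^ 5"
    unfolding p slice_piece_def
    using roof_slice_tri_area[OF N step slice_cut_trapezoid[OF n nk p(2)]] by simp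
qed

lemma slice_pieces_separated:
  assumes "p \<in> {1..k} \<times> UNIV" "q \<in> {1..k} \<times> UNIV" "p \<noteq> q"
  shows "separated (slice_piece n p) (slice_piece n q)"
proof -
  obtain i j i' j' where pq: "p = (i, j)" "q = (i', j')" "i \<in> {1..k}" "i' \<in> {1..k}"
    using assms(1,2) by auto
  have N: "real n \<ge> 4"
    using n by simp
  note step = slice_cut_step[OF n nk pq(3)] and step' = slice_cut_step[OF n nk pq(4)]
  note strip = slice_tri_in_strip[OF balanced_foot_between[OF step(2) roof_pos[OF N step]] roof_pos[OF N step]]
    and strip' = slice_tri_in_strip[OF balanced_foot_between[OF step'(2) roof_pos[OF N step']] roof_pos[OF N step']]
  consider "i = i'" | "i < i'" | "i' < i"
    by linarith
  then show ?thesis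
  proof cases
    case 1
    then show ?thesis
      using assms(3) slice_tri_separated[OF balanced_foot_between[OF step(2) roof_pos[OF N step]] roof_pos[OF N step]]
      unfolding pq slice_piece_def roof_slice_tri_def by simp
  next
    case 2
    then have "slice_cut n i \<le> slice_cut n (i' - 1)"
      by (intro slice_cut_mono) simp
    then show ?thesis
      using separated_if_in_strip[OF strip strip'] unfolding pq slice_piece_def roof_slice_tri_def by simp
  next
    case 3
    then have "slice_cut n i' \<le> slice_cut n (i - 1)"
      by (intro slice_cut_mono) simp
    then show ?thesis
      using separated_sym[OF separated_if_in_strip[OF strip' strip]]
      unfolding pq slice_piece_def roof_slice_tri_def by simp
  qed
qed

lemma slice_pieces_union: "top_tri (real n) \<union> (\<Union>p\<in>{1..k} \<times> UNIV. slice_piece n p) = unit_square"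
proof
  have "real n \<ge> 2"
    using n by simp
  then show "top_tri (real n) \<union> (\<Union>p\<in>{1..k} \<times> UNIV. slice_piece n p) \<subseteq> unit_square"
    using top_tri_subset_unit_square slice_piece_props(3) by blast
next
  show "unit_square \<subseteq> top_tri (real n) \<union> (\<Union>p\<in>{1..k} \<times> UNIV. slice_piece n p)"
  proof
    fix p assume "p \<in> unit_square"
    then obtain x y where p: "p = pt x y" and xy: "0 \<le> x" "x \<le> 1" "0 \<le> y" "y \<le> 1"
      unfolding mem_unit_square by (metis pt_eta)
    show "p \<in> top_tri (real n) \<union> (\<Union>p\<in>{1..k} \<times> UNIV. slice_piece n p)"
    proof (cases "roof (real n) x \<le> y")
      case True
      then show ?thesis
        using mem_top_tri[of "real n" x y] n xy unfolding p by simp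
    next
      case False
      obtain i where i: "i \<in> {1..k}" "slice_cut n (i - 1) \<le> x" "x \<le> slice_cut n i"
        using exists_step_containing[of k "slice_cut n" x] n nk xy slice_cut_last[OF n nk] by auto
      have "real n \<ge> 4"
        using n by simp
      then obtain j where "pt x y \<in> roof_slice_tri (real n) (slice_cut n (i - 1)) (slice_cut n i) j"
        using roof_slice_tri_cover[OF _ slice_cut_step[OF n nk i(1)] i(2,3) xy(3)] False by fastforce
      then show ?thesis
        unfolding p slice_piece_def using i(1) by blast
    qed
  qed
qed

lemma slice_dissection_props:
  defines "D \<equiv> slice_dissection n k (slice_cut n) (slice_foot n) (slice_mid n)"
  shows "dissection D unit_square" "card D = n" "drange D \<le> 512 / real n ^ 5"
proof -
  have D: "D = insert (top_tri (real n)) (slice_piece n ` ({1..k} \<times> UNIV))"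
    unfolding D_def using n by (simp add: slice_dissection_eq)
  have N: "real n \<ge> 2"
    using n by simp
  show "dissection D unit_square" "card D = n"
    unfolding D using dissection_insert_separated[OF _ top_tri_nondeg[OF N] slice_piece_props(1,2)
        slice_pieces_separated slice_pieces_union] nk
    by (simp_all add: card_cartesian_product UNIV_slice_label)
  have "\<bar>area T - 1 / real n\<bar> \<le> 256 / real n ^ 5" if "T \<in> D" for T
    using that slice_piece_props(4) top_tri_area[OF N] unfolding D by auto
  then have "drange D \<le> 2 * (256 / real n ^ 5)"
    by (intro drange_le) (simp_all add: D UNIV_slice_label)
  then show "drange D \<le> 512 / real n ^ 5"
    by simp
qed

end

theorem theorem7p2:
  shows "\<exists>C::real. C > 0 \<and>
    (\<forall>n::nat. n \<ge> 5 \<and> n mod 4 = 1 \<longrightarrow>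
       (\<exists>D xs m u. dissection D unit_square \<and> card D = n \<and>
          drange D \<le> C / real n ^ 5 \<and>
          xs 0 = 0 \<and> xs ((n - 1) div 4) = 1 \<and>
          (\<forall>i\<in>{1..(n - 1) div 4}. xs (i - 1) < xs i \<and>
              xs (i - 1) \<le> m i \<and> m i \<le> xs i \<and>
              xs (i - 1) \<le> u i \<and> u i \<le> xs i) \<and>
          D = slice_dissection n ((n - 1) div 4) xs m u))"
proof (intro exI[of _ 512] conjI allI impI)
  show "(512::real) > 0"
    by simp
  fix n :: nat
  assume hyp: "n \<ge> 5 \<and> n mod 4 = 1"
  define k where "k = (n - 1) div 4"
  have n: "n \<ge> 5" and nk: "n = 4 * k + 1"
    using hyp unfolding k_def by presburger+
  show "\<exists>D xs m u. dissection D unit_square \<and> card D = n \<and> drange D \<le> 512 / real n ^ 5 \<and>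
      xs 0 = 0 \<and> xs ((n - 1) div 4) = 1 \<and>
      (\<forall>i\<in>{1..(n - 1) div 4}. xs (i - 1) < xs i \<and> xs (i - 1) \<le> m i \<and> m i \<le> xs i \<and>
         xs (i - 1) \<le> u i \<and> u i \<le> xs i) \<and>
      D = slice_dissection n ((n - 1) div 4) xs m u"
    unfolding k_def[symmetric]
    using slice_dissection_props[OF n nk] slice_cut_last[OF n nk] slice_cut_step(2)[OF n nk]
      slice_foot_mid_between[OF n nk]
    by (intro exI[of _ "slice_dissection n k (slice_cut n) (slice_foot n) (slice_mid n)"]
        exI[of _ "slice_cut n"] exI[of _ "slice_foot n"] exI[of _ "slice_mid n"]) (auto intro: less_imp_le)
qed

end
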